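(* Let $p,r$ be positive integers, $q=p+r$, and let $\Phi:U_{pq}(\mathbb{H})\to\mathbb{C}^{r\times 2p}$ be the map $$\Phi(Q)=\begin{pmatrix}U & V\end{pmatrix}\begin{pmatrix}Z-X & W-Y\\ \bar Y-\bar W & \bar Z-\bar X\end{pmatrix}^{-1},$$ where $Q=(Q_0;Q_1;Q_2)$ with $Q_0=Z+Wj$, $Q_1=X+Yj$, $Q_2=U+Vj$ ($Z,W,X,Y\in\mathbb{C}^{p\times p}$, $U,V\in\mathbb{C}^{r\times p}$). Then the complex valued components of $\Phi$ form an orthogonal harmonic family of $\mathbf{GL}_p(\mathbb{H})$-invariant functions on $U_{pq}(\mathbb{H})$, equipped with the semi-Euclidean metric.
   Context: $\mathbb{H}=\{z+wj: z,w\in\mathbb{C}\}$. $U_{pq}(\mathbb{H})=\{Q\in\mathbb{H}^{(p+q)\times p}: -Q_0^*Q_0+Q_1^*Q_1+Q_2^*Q_2<0\}$ (negative definite on $\mathbb{H}^p\setminus\{0\}$), where $Q_0,Q_1$ have $p$ rows and $Q_2$ has $r$ rows; $\mathbf{GL}_p(\mathbb{H})$ acts by right multiplication. The semi-Euclidean metric is $(X,Y)=\mathfrak{Re}\,\mathrm{trace}(X^*\mathrm{diag}(-I_p,I_q)Y)$; in the complex coordinates it is $-|dZ|^2-|dW|^2+|dX|^2+|dY|^2+|dU|^2+|dV|^2$. For a semi-Riemannian manifold $(M,g)$ and complex functions $\phi,\psi$, $\tau(\phi)$ is the Laplace–Beltrami operator (extended complex-linearly) and $\kappa(\phi,\psi)=g(\mathrm{grad}\,\phi,\mathrm{grad}\,\psi)$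 with $g$ extended complex-bilinearly. A set $\Omega$ of complex functions is an orthogonal harmonic family if $\tau(\phi)=0$ and $\kappa(\phi,\psi)=0$ for all $\phi,\psi\in\Omega$. *)

theory Defs
  imports "HOL-Analysis.Analysis"
begin

text \<open>A quaternionic m x n matrix  A + B j  (A, B complex m x n matrices) is represented
  by the pair (A, B).  Multiplication uses  j c = cnj c j  and  j^2 = -1.\<close>

type_synonym ('m, 'n) qmat = "(complex^'n^'m) \<times> (complex^'n^'m)"

definition cmat_cnj :: "complex^'n^'m \<Rightarrow> complex^'n^'m" where
  "cmat_cnj A = (\<chi> i k. cnj (A $ i $ k))"

definition qmult :: "('m::finite, 'n::finite) qmat \<Rightarrow> ('n, 'k::finite) qmat \<Rightarrow> ('m, 'k) qmat" where
  "qmult M N = (case M of (A, B) \<Rightarrow> case N of (C, D) \<Rightarrow>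
      (A ** C - B ** cmat_cnj D, A ** D + B ** cmat_cnj C))"

text \<open>Quaternionic conjugate transpose: (A + B j)^* = A^* - B^T j.\<close>
definition qadj :: "('m::finite, 'n::finite) qmat \<Rightarrow> ('n, 'm) qmat" where
  "qadj M = (case M of (A, B) \<Rightarrow> (transpose (cmat_cnj A), - transpose B))"

definition qid :: "('n::finite, 'n) qmat" where
  "qid = (mat 1, 0)"

definition qinvertible :: "('n::finite, 'n) qmat \<Rightarrow> bool" where
  "qinvertible g \<longleftrightarrow> (\<exists>h. qmult g h = qid \<and> qmult h g = qid)"

definition qneg_def :: "('p::finite, 'p) qmat \<Rightarrow> bool" where
  "qneg_def H \<longleftrightarrow> (\<forall>x :: ('p, 1) qmat. x \<noteq> 0 \<longrightarrow>
      Re (fst (qmult (qadj x) (qmult H x)) $ 1 $ 1) < 0)"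

text \<open>Rows of Q in H^{(p+q) x p}, q = p + r, are indexed by  'p + ('p + 'r):
  Inl i are the rows of Q_0, Inr (Inl i) those of Q_1, Inr (Inr k) those of Q_2.\<close>

type_synonym ('p, 'r) qpoint = "('p + ('p + 'r), 'p) qmat"

definition Jsig :: "complex^('p::finite + ('p + 'r::finite))^('p + ('p + 'r))" where
  "Jsig = (\<chi> i k. if i = k then (case i of Inl _ \<Rightarrow> -1 | Inr _ \<Rightarrow> 1) else 0)"

definition Upq :: "('p::finite, 'r::finite) qpoint set" where
  "Upq = {Q. qneg_def (qmult (qadj Q) (qmult (Jsig, 0) Q))}"

text \<open>Semi-Euclidean metric (X,Y) = Re trace (X^* diag(-I_p, I_q) Y); the real part of a
  quaternion a + b j is Re a.\<close>
definition sE_metric :: "('p::finite, 'r::finite) qpoint \<Rightarrow> ('p, 'r) qpoint \<Rightarrow> real" where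
  "sE_metric X Y = Re (trace (fst (qmult (qadj X) (qmult (Jsig, 0) Y))))"

definition dpart :: "('a::real_normed_vector \<Rightarrow> complex) \<Rightarrow> 'a \<Rightarrow> 'a \<Rightarrow> complex" where
  "dpart f x v = frechet_derivative f (at x) v"

text \<open>The standard real basis  Basis  of the ambient space is orthogonal for the
  (flat) semi-Euclidean metric with  g(b,b) = +-1, so the Laplace-Beltrami operator and
  kappa(phi,psi) = g(grad phi, grad psi) are given by the formulas below
  (g^{bb} = 1 / g(b,b)).\<close>
definition tau :: "(('p::finite, 'r::finite) qpoint \<Rightarrow> complex) \<Rightarrow> ('p, 'r) qpoint \<Rightarrow> complex" where
  "tau f Q = (\<Sum>b\<in>Basis. complex_of_real (1 / sE_metric b b) * dpart (\<lambda>Q'. dpart f Q' b) Q b)"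

definition kappa :: "(('p::finite, 'r::finite) qpoint \<Rightarrow> complex) \<Rightarrow> (('p, 'r) qpoint \<Rightarrow> complex)
      \<Rightarrow> ('p, 'r) qpoint \<Rightarrow> complex" where
  "kappa f g Q = (\<Sum>b\<in>Basis. complex_of_real (1 / sE_metric b b) * dpart f Q b * dpart g Q b)"

definition twice_diff_on :: "('a::real_normed_vector \<Rightarrow> complex) \<Rightarrow> 'a set \<Rightarrow> bool" where
  "twice_diff_on f S \<longleftrightarrow> (\<forall>x\<in>S. f differentiable (at x) \<and>
      (\<forall>v. (\<lambda>y. dpart f y v) differentiable (at x)))"

definition orthogonal_harmonic_family ::
  "('p::finite, 'r::finite) qpoint set \<Rightarrow> (('p, 'r) qpoint \<Rightarrow> complex) set \<Rightarrow> bool" where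
  "orthogonal_harmonic_family S \<Omega> \<longleftrightarrow>
     (\<forall>\<phi>\<in>\<Omega>. twice_diff_on \<phi> S \<and> (\<forall>Q\<in>S. tau \<phi> Q = 0)) \<and>
     (\<forall>\<phi>\<in>\<Omega>. \<forall>\<psi>\<in>\<Omega>. \<forall>Q\<in>S. kappa \<phi> \<psi> Q = 0)"

definition GL_invariant_on :: "('p::finite, 'r::finite) qpoint set \<Rightarrow> (('p, 'r) qpoint \<Rightarrow> 'b) \<Rightarrow> bool" where
  "GL_invariant_on S f \<longleftrightarrow> (\<forall>Q\<in>S. \<forall>g :: ('p, 'p) qmat. qinvertible g \<longrightarrow> f (qmult Q g) = f Q)"

text \<open>Q_0 = Z + W j, Q_1 = X + Y j, Q_2 = U + V j.\<close>
definition Phi_denom :: "('p::finite, 'r::finite) qpoint \<Rightarrow> complex^('p + 'p)^('p + 'p)" where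
  "Phi_denom Q = (case Q of (A, B) \<Rightarrow> (\<chi> a c.
      case a of
        Inl i \<Rightarrow> (case c of Inl k \<Rightarrow> A $ Inl i $ k - A $ Inr (Inl i) $ k      \<comment> \<open>Z - X\<close>
                         | Inr k \<Rightarrow> B $ Inl i $ k - B $ Inr (Inl i) $ k)     \<comment> \<open>W - Y\<close>
      | Inr i \<Rightarrow> (case c of Inl k \<Rightarrow> cnj (B $ Inr (Inl i) $ k) - cnj (B $ Inl i $ k)  \<comment> \<open>conj Y - conj W\<close>
                         | Inr k \<Rightarrow> cnj (A $ Inl i $ k) - cnj (A $ Inr (Inl i) $ k))))" \<comment> \<open>conj Z - conj X\<close>

definition Phi_num :: "('p::finite, 'r::finite) qpoint \<Rightarrow> complex^('p + 'p)^'r" where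
  "Phi_num Q = (case Q of (A, B) \<Rightarrow> (\<chi> s c.
      case c of Inl k \<Rightarrow> A $ Inr (Inr s) $ k    \<comment> \<open>U\<close>
              | Inr k \<Rightarrow> B $ Inr (Inr s) $ k))"  \<comment> \<open>V\<close>

definition Phi :: "('p::finite, 'r::finite) qpoint \<Rightarrow> complex^('p + 'p)^'r" where
  "Phi Q = Phi_num Q ** matrix_inv (Phi_denom Q)"

end

theory Submission
  imports Defs
begin

(*
  Phi Q = N D^-1, where D is the complex representation [A, B; -cnj B, cnj A] of the quaternionic
  matrix Q_0 - Q_1 = A + B j, and N consists of the first r rows of the complex representation
  of Q_2.  Right multiplication of Q by g multiplies both D and N on the right by the representation
  of g, so Phi is GL_p(H)-invariant.  On U_pq(H) the matrix D is invertible: a kernel vector of D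
  corresponds to a nonzero quaternionic column xi with Q_0 xi = Q_1 xi, and then the Hermitian
  form of Q^* diag(-I_p, I_q) Q at xi equals |Q_2 xi|^2 >= 0.

  Where D is invertible, every component phi of Phi is a rational function of the real
  coordinates.  Changing an entry of Q_0 and the same entry of Q_1 together leaves D and N
  unchanged, so phi is constant along the sum of the two coordinate directions; as these have
  metric signs -1 and +1, their contributions to tau(phi) and kappa(phi, psi) cancel.  Along the
  coordinate direction of an entry u of Q_2 (u = 1 or u = i, in the complex or in the j-part)
  phi is affine with slope u c, where c does not depend on u; so the second derivative vanishes,
  and the two directions u = 1, u = i contribute c c' + (i c) (i c') = 0 to kappa(phi, psi).
*)

section \<open>Directional derivatives\<close>

lemma dpart_eq_frechet_derivative: "dpart f x = frechet_derivative f (at x)"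
  by (simp add: fun_eq_iff dpart_def)

lemma dpart_eq: "(f has_derivative D) (at x) \<Longrightarrow> dpart f x = D"
  by (simp add: dpart_eq_frechet_derivative frechet_derivative_at[symmetric])

lemma has_derivative_dpart: "f differentiable (at x) \<Longrightarrow> (f has_derivative dpart f x) (at x)"
  by (simp add: dpart_eq_frechet_derivative frechet_derivative_works)

lemma dpart_uminus:
  "f differentiable (at x) \<Longrightarrow> dpart (\<lambda>y. - f y) x v = - dpart f x v"
  using dpart_eq[OF has_derivative_minus[OF has_derivative_dpart]] by metis

lemma dpart_cong_open:
  "f differentiable (at x) \<Longrightarrow> open S \<Longrightarrow> x \<in> S \<Longrightarrow> (\<And>y. y \<in> S \<Longrightarrow> f y = g y) \<Longrightarrow>
    dpart f x = dpart g x"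
  unfolding dpart_eq_frechet_derivative by (rule frechet_derivative_transform_within_open)

lemma has_derivative_periodic:
  assumes periodic: "\<And>y. f (y + c) = f y" and "(f has_derivative D) (at x)"
  shows "(f has_derivative D) (at (x + c))"
proof -
  have "((\<lambda>y. y - c) has_derivative id) (at (x + c))"
    by (auto intro!: derivative_eq_intros simp: id_def)
  from has_derivative_compose[OF this, of f D] assms(2)
  have "((\<lambda>y. f (y - c)) has_derivative D) (at (x + c))" by (simp add: o_def)
  moreover have "f (y - c) = f y" for y using periodic[of "y - c"] by simp
  ultimately show ?thesis by simp
qed

lemma dpart_periodic:
  assumes "\<And>y. f (y + c) = f y"
  shows "dpart f (x + c) = dpart f x"
proof -
  have "f (y + - c) = f y" for y using assms[of "y - c"] by simp
  then have "(f has_derivative D) (at (x + c)) \<longleftrightarrow> (f has_derivative D) (at x)" for D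
    using has_derivative_periodic[of f c D x] has_derivative_periodic[of f "- c" D "x + c"] assms
    by auto
  then show ?thesis
    unfolding dpart_eq_frechet_derivative frechet_derivative_def by simp
qed

lemma dpart_line:
  assumes "f differentiable (at x)"
  shows "((\<lambda>t. f (x + t *\<^sub>R v)) has_vector_derivative dpart f x v) (at 0)"
proof -
  have "((\<lambda>t. x + t *\<^sub>R v) has_derivative (\<lambda>t. t *\<^sub>R v)) (at 0)"
    by (auto intro!: derivative_eq_intros)
  moreover have "(f has_derivative dpart f x) (at (x + 0 *\<^sub>R v))"
    using has_derivative_dpart[OF assms] by simp
  ultimately have "((\<lambda>t. f (x + t *\<^sub>R v)) has_derivative (\<lambda>t. dpart f x (t *\<^sub>R v))) (at 0)"
    by (rule has_derivative_compose)
  then show ?thesis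
    unfolding has_vector_derivative_def
    using linear_scale[OF has_derivative_linear[OF has_derivative_dpart[OF assms]]] by simp
qed

lemma dpart_affine_line:
  assumes "f differentiable (at x)" "\<And>t. f (x + t *\<^sub>R v) = f x + of_real t * c"
  shows "dpart f x v = c"
proof -
  have "((\<lambda>t. f x + of_real t * c) has_vector_derivative c) (at 0)"
    by (auto intro!: derivative_eq_intros)
  then have "((\<lambda>t. f (x + t *\<^sub>R v)) has_vector_derivative c) (at 0)"
    by (simp add: assms(2))
  with dpart_line[OF assms(1)] show ?thesis
    by (rule vector_derivative_unique_at)
qed

lemma dpart_opposite_directions:
  fixes f :: "'a::real_normed_vector \<Rightarrow> complex"
  assumes S: "open S" "x \<in> S" and f: "twice_diff_on f S"
    and invariant: "\<And>y t. f (y + t *\<^sub>R (v + w)) = f y"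
  shows "dpart f x v = - dpart f x w"
    and "dpart (\<lambda>y. dpart f y v) x v = dpart (\<lambda>y. dpart f y w) x w"
proof -
  have opposite: "dpart g y v = - dpart g y w"
    if "g differentiable (at y)" "\<And>z t. g (z + t *\<^sub>R (v + w)) = g z" for g :: "'a \<Rightarrow> complex" and y
  proof -
    have "dpart g y (v + w) = 0"
      by (rule dpart_affine_line[OF that(1)]) (simp add: that(2))
    then show ?thesis
      using linear_add[OF has_derivative_linear[OF has_derivative_dpart[OF that(1)]]]
      by (simp add: eq_neg_iff_add_eq_0)
  qed
  have first: "dpart f y v = - dpart f y w" if "y \<in> S" for y
    using f that invariant unfolding twice_diff_on_def by (blast intro: opposite)
  then show "dpart f x v = - dpart f x w" using S by blast
  have diff: "(\<lambda>y. dpart f y u) differentiable (at x)" for u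
    using f S unfolding twice_diff_on_def by blast
  have "dpart f (z + t *\<^sub>R (v + w)) = dpart f z" for z t
    by (rule dpart_periodic) (rule invariant)
  then have "dpart (\<lambda>y. dpart f y w) x v = - dpart (\<lambda>y. dpart f y w) x w"
    by (intro opposite diff) simp
  moreover have "dpart (\<lambda>y. dpart f y v) x v = dpart (\<lambda>y. - dpart f y w) x v"
    using dpart_cong_open[OF diff S] first by metis
  ultimately show "dpart (\<lambda>y. dpart f y v) x v = dpart (\<lambda>y. dpart f y w) x w"
    by (simp add: dpart_uminus[OF diff])
qed

lemma dpart_affine_direction:
  fixes f :: "'a::real_normed_vector \<Rightarrow> complex"
  assumes "x \<in> S" and f: "twice_diff_on f S"
    and affine: "\<And>y t. f (y + t *\<^sub>R v) = f y + of_real t * c y"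
    and c: "\<And>y t. c (y + t *\<^sub>R v) = c y"
    and S: "\<And>y t. y \<in> S \<Longrightarrow> y + t *\<^sub>R v \<in> S"
  shows "dpart f x v = c x" and "dpart (\<lambda>y. dpart f y v) x v = 0"
proof -
  have first: "dpart f y v = c y" if "y \<in> S" for y
    using f that unfolding twice_diff_on_def by (blast intro: dpart_affine_line affine)
  then show "dpart f x v = c x" using \<open>x \<in> S\<close> .
  show "dpart (\<lambda>y. dpart f y v) x v = 0"
  proof (rule dpart_affine_line)
    show "(\<lambda>y. dpart f y v) differentiable (at x)"
      using f \<open>x \<in> S\<close> unfolding twice_diff_on_def by blast
    show "dpart f (x + t *\<^sub>R v) v = dpart f x v + of_real t * 0" for t
      using \<open>x \<in> S\<close> by (simp add: first S c)
  qed
qed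

lemma matrix_add_rdistrib: "((A::'a::semiring_1^'n^'m) + B) ** C = A ** C + B ** C"
  by (vector matrix_matrix_mult_def sum.distrib[symmetric] field_simps)

lemma matrix_diff_ldistrib: "(A::'a::ring_1^'n^'m) ** (B - C) = A ** B - A ** C"
  by (vector matrix_matrix_mult_def sum_subtractf[symmetric] field_simps)

lemma matrix_diff_rdistrib: "((A::'a::ring_1^'n^'m) - B) ** C = A ** C - B ** C"
  by (vector matrix_matrix_mult_def sum_subtractf[symmetric] field_simps)

lemma matrix_neg_left: "(- (A::'a::ring_1^'n^'m)) ** B = - (A ** B)"
  by (vector matrix_matrix_mult_def sum_negf[symmetric])

lemma matrix_neg_right: "(A::'a::ring_1^'n^'m) ** (- B) = - (A ** B)"
  by (vector matrix_matrix_mult_def sum_negf[symmetric])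

lemma transpose_add: "transpose ((A::'a::ring_1^'n^'m) + B) = transpose A + transpose B"
  and transpose_diff: "transpose ((A::'a::ring_1^'n^'m) - B) = transpose A - transpose B"
  and transpose_uminus: "transpose (- (A::'a::ring_1^'n^'m)) = - transpose A"
  by (simp_all add: vec_eq_iff transpose_def)

lemma matrix_inv_right: "invertible A \<Longrightarrow> A ** matrix_inv A = mat 1"
  and matrix_inv_left: "invertible A \<Longrightarrow> matrix_inv A ** A = mat 1"
  unfolding invertible_def matrix_inv_def by (metis (mono_tags, lifting) someI_ex)+

lemma matrix_inv_unique:
  assumes "A ** B = mat 1" "B ** A = mat 1"
  shows "matrix_inv A = B"
proof -
  have "invertible A" using assms invertible_def by blast
  then have "matrix_inv A = matrix_inv A ** (A ** B)" by (simp add: assms)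
  also have "\<dots> = B" by (simp add: matrix_mul_assoc matrix_inv_left \<open>invertible A\<close>)
  finally show ?thesis .
qed

lemma matrix_inv_mult:
  assumes "invertible A" "invertible B"
  shows "matrix_inv (A ** B) = matrix_inv B ** matrix_inv A"
proof (rule matrix_inv_unique)
  show "A ** B ** (matrix_inv B ** matrix_inv A) = mat 1"
    by (metis assms matrix_inv_right matrix_mul_assoc matrix_mul_rid)
  show "matrix_inv B ** matrix_inv A ** (A ** B) = mat 1"
    by (metis assms matrix_inv_left matrix_mul_assoc matrix_mul_rid)
qed

lemma matrix_inv_cramer:
  fixes A :: "complex^'n::finite^'n"
  assumes "det A \<noteq> 0"
  shows "matrix_inv A $ i $ j = det (\<chi> k l. if l = i then (if k = j then 1 else 0) else A $ k $ l) / det A"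
proof -
  let ?e = "(\<chi> k. if k = j then 1 else 0) :: complex^'n"
  have "invertible A" using assms invertible_det_nz by blast
  then have "A *v (matrix_inv A *v ?e) = ?e"
    by (simp add: matrix_vector_mul_assoc matrix_inv_right)
  then have "(matrix_inv A *v ?e) $ i = det (\<chi> k l. if l = i then ?e $ k else A $ k $ l) / det A"
    using cramer[OF assms] by simp
  moreover have "(matrix_inv A *v ?e) $ i = matrix_inv A $ i $ j"
    by (simp add: matrix_vector_mult_def if_distrib cong: if_cong)
  moreover have "(\<chi> k l. if l = i then ?e $ k else A $ k $ l)
      = (\<chi> k l. if l = i then (if k = j then 1 else 0) else A $ k $ l)"
    by (simp add: vec_eq_iff)
  ultimately show ?thesis by metis
qed

section \<open>Locally rational functions\<close>

(* The last rule makes the notion local to S; it is what admits matrix_inv, which is given by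
   Cramer's rule only where the determinant does not vanish. *)
inductive rational_on :: "'a::real_normed_vector set \<Rightarrow> ('a \<Rightarrow> complex) \<Rightarrow> bool" for S where
  rational_on_const: "rational_on S (\<lambda>x. c)"
| rational_on_bounded_linear: "bounded_linear L \<Longrightarrow> rational_on S L"
| rational_on_add: "rational_on S f \<Longrightarrow> rational_on S g \<Longrightarrow> rational_on S (\<lambda>x. f x + g x)"
| rational_on_mult: "rational_on S f \<Longrightarrow> rational_on S g \<Longrightarrow> rational_on S (\<lambda>x. f x * g x)"
| rational_on_inverse:
    "rational_on S f \<Longrightarrow> (\<And>x. x \<in> S \<Longrightarrow> f x \<noteq> 0) \<Longrightarrow> rational_on S (\<lambda>x. inverse (f x))"
| rational_on_cong: "rational_on S g \<Longrightarrow> (\<And>x. x \<in> S \<Longrightarrow> f x = g x) \<Longrightarrow> rational_on S f"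

lemma rational_on_uminus: "rational_on S f \<Longrightarrow> rational_on S (\<lambda>x. - f x)"
  using rational_on_mult[OF rational_on_const[of S "-1"]] by simp

lemma rational_on_sum:
  "finite I \<Longrightarrow> (\<And>i. i \<in> I \<Longrightarrow> rational_on S (f i)) \<Longrightarrow> rational_on S (\<lambda>x. \<Sum>i\<in>I. f i x)"
  by (induction I rule: finite_induct) (auto intro: rational_on_const rational_on_add)

lemma rational_on_prod:
  "finite I \<Longrightarrow> (\<And>i. i \<in> I \<Longrightarrow> rational_on S (f i)) \<Longrightarrow> rational_on S (\<lambda>x. \<Prod>i\<in>I. f i x)"
  by (induction I rule: finite_induct) (auto intro: rational_on_const rational_on_mult)

lemma rational_on_has_derivative:
  assumes "rational_on S f" "open S"
  shows "\<exists>F. (\<forall>v. rational_on S (\<lambda>x. F x v)) \<and> (\<forall>x\<in>S. (f has_derivative F x) (at x))"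
  using assms(1)
proof induction
  case (rational_on_const c)
  show ?case
    by (rule exI[of _ "\<lambda>x v. 0"]) (simp add: rational_on.rational_on_const)
next
  case (rational_on_bounded_linear L)
  then show ?case
    by (intro exI[of _ "\<lambda>x. L"])
       (simp add: rational_on.rational_on_const bounded_linear_imp_has_derivative)
next
  case (rational_on_add f g)
  then obtain F G where "\<forall>v. rational_on S (\<lambda>x. F x v)" "\<forall>x\<in>S. (f has_derivative F x) (at x)"
    "\<forall>v. rational_on S (\<lambda>x. G x v)" "\<forall>x\<in>S. (g has_derivative G x) (at x)" by blast
  then show ?case
    by (intro exI[of _ "\<lambda>x v. F x v + G x v"]) (simp add: rational_on.rational_on_add)
next
  case (rational_on_mult f g)
  then obtain F G where "\<forall>v. rational_on S (\<lambda>x. F x v)" "\<forall>x\<in>S. (f has_derivative F x) (at x)"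
    "\<forall>v. rational_on S (\<lambda>x. G x v)" "\<forall>x\<in>S. (g has_derivative G x) (at x)" by blast
  with rational_on_mult.hyps show ?case
    by (intro exI[of _ "\<lambda>x v. f x * G x v + F x v * g x"])
       (simp add: rational_on.rational_on_add rational_on.rational_on_mult)
next
  case (rational_on_inverse f)
  then obtain F where "\<forall>v. rational_on S (\<lambda>x. F x v)" "\<forall>x\<in>S. (f has_derivative F x) (at x)" by blast
  with rational_on_inverse.hyps show ?case
    by (intro exI[of _ "\<lambda>x v. - (inverse (f x) * F x v * inverse (f x))"])
       (simp add: rational_on_uminus rational_on.rational_on_mult rational_on.rational_on_inverse
         has_derivative_inverse)
next
  case (rational_on_cong g f)
  then obtain G where "\<forall>v. rational_on S (\<lambda>x. G x v)" "\<forall>x\<in>S. (g has_derivative G x) (at x)" by blast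
  with rational_on_cong.hyps(2) \<open>open S\<close> show ?case
    by (metis has_derivative_transform_within_open)
qed

lemma rational_on_differentiable:
  "rational_on S f \<Longrightarrow> open S \<Longrightarrow> x \<in> S \<Longrightarrow> f differentiable (at x)"
  using rational_on_has_derivative by (metis differentiable_def)

lemma rational_on_dpart:
  assumes "rational_on S f" "open S"
  shows "rational_on S (\<lambda>x. dpart f x v)"
proof -
  obtain F where "\<forall>v. rational_on S (\<lambda>x. F x v)" "\<forall>x\<in>S. (f has_derivative F x) (at x)"
    using rational_on_has_derivative[OF assms] by blast
  then show ?thesis
    by (metis dpart_eq rational_on_cong)
qed

lemma twice_diff_on_rational_on: "rational_on S f \<Longrightarrow> open S \<Longrightarrow> twice_diff_on f S"
  unfolding twice_diff_on_def by (blast intro: rational_on_differentiable rational_on_dpart)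

lemma rational_on_det:
  fixes M :: "'a::real_normed_vector \<Rightarrow> complex^'n::finite^'n"
  assumes "\<And>i j. rational_on S (\<lambda>x. M x $ i $ j)"
  shows "rational_on S (\<lambda>x. det (M x))"
  unfolding det_def
  by (intro rational_on_sum rational_on_prod rational_on_mult rational_on_const assms) auto

lemma rational_on_matrix_inv:
  fixes M :: "'a::real_normed_vector \<Rightarrow> complex^'n::finite^'n"
  assumes entries: "\<And>i j. rational_on S (\<lambda>x. M x $ i $ j)"
    and det: "\<And>x. x \<in> S \<Longrightarrow> det (M x) \<noteq> 0"
  shows "rational_on S (\<lambda>x. matrix_inv (M x) $ i $ j)"
proof (rule rational_on_cong)
  let ?C = "\<lambda>x. \<chi> k l. if l = i then (if k = j then 1 else 0) else M x $ k $ l"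
  have "rational_on S (\<lambda>x. ?C x $ k $ l)" for k l
    by (cases "l = i") (simp_all add: entries rational_on_const)
  then have "rational_on S (\<lambda>x. det (?C x))" by (rule rational_on_det)
  then show "rational_on S (\<lambda>x. det (?C x) * inverse (det (M x)))"
    using rational_on_mult rational_on_inverse[OF rational_on_det[OF entries] det] by blast
  show "matrix_inv (M x) $ i $ j = det (?C x) * inverse (det (M x))" if "x \<in> S" for x
    using matrix_inv_cramer[OF det[OF that]] by (simp add: divide_inverse)
qed

section \<open>Quaternionic matrices and their complex representation\<close>

lemma cmat_cnj_mult: "cmat_cnj (A ** B) = cmat_cnj A ** cmat_cnj B"
  by (simp add: cmat_cnj_def matrix_matrix_mult_def vec_eq_iff)

lemma cmat_cnj_add: "cmat_cnj (A + B) = cmat_cnj A + cmat_cnj B"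
  and cmat_cnj_diff: "cmat_cnj (A - B) = cmat_cnj A - cmat_cnj B"
  and cmat_cnj_uminus: "cmat_cnj (- A) = - cmat_cnj A"
  and cmat_cnj_cmat_cnj: "cmat_cnj (cmat_cnj A) = A"
  and cmat_cnj_transpose: "cmat_cnj (transpose A) = transpose (cmat_cnj A)"
  by (simp_all add: cmat_cnj_def vec_eq_iff transpose_def)

lemmas cmat_algebra = matrix_add_ldistrib matrix_add_rdistrib matrix_diff_ldistrib matrix_diff_rdistrib
  matrix_neg_left matrix_neg_right matrix_mul_assoc cmat_cnj_mult cmat_cnj_add cmat_cnj_diff
  cmat_cnj_uminus cmat_cnj_cmat_cnj

lemma qmult_assoc: "qmult (qmult M N) P = qmult M (qmult N P)"
  by (cases M; cases N; cases P) (simp add: qmult_def cmat_algebra algebra_simps)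

lemma qadj_qmult: "qadj (qmult M N) = qmult (qadj N) (qadj M)"
  by (cases M; cases N)
     (simp add: qmult_def qadj_def cmat_algebra matrix_transpose_mul cmat_cnj_transpose
       transpose_add transpose_diff transpose_uminus algebra_simps)

lemma sum_UNIV_sum_type:
  "(\<Sum>x\<in>(UNIV::('a::finite + 'b::finite) set). f x) = (\<Sum>i\<in>UNIV. f (Inl i)) + (\<Sum>i\<in>UNIV. f (Inr i))"
  using sum.Plus[of "UNIV::'a set" "UNIV::'b set" f] by (simp add: o_def)

definition crep :: "('m::finite, 'n::finite) qmat \<Rightarrow> complex^('n + 'n)^('m + 'm)" where
  "crep M = (case M of (A, B) \<Rightarrow> (\<chi> a b. case a of
       Inl i \<Rightarrow> (case b of Inl k \<Rightarrow> A $ i $ k | Inr k \<Rightarrow> B $ i $ k)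
     | Inr i \<Rightarrow> (case b of Inl k \<Rightarrow> - cnj (B $ i $ k) | Inr k \<Rightarrow> cnj (A $ i $ k))))"

lemma crep_qmult: "crep (qmult M N) = crep M ** crep N"
  by (cases M; cases N)
     (auto simp: vec_eq_iff crep_def qmult_def matrix_matrix_mult_def sum_UNIV_sum_type cmat_cnj_def
        sum_subtractf sum_negf split: sum.splits)

lemma crep_qid: "crep qid = mat 1"
  by (auto simp: vec_eq_iff crep_def qid_def mat_def split: sum.splits)

lemma invertible_crep: "qinvertible g \<Longrightarrow> invertible (crep g)"
  unfolding qinvertible_def invertible_def by (metis crep_qid crep_qmult)

definition row_sign :: "'p + ('p + 'r) \<Rightarrow> real" where
  "row_sign a = (case a of Inl _ \<Rightarrow> -1 | Inr _ \<Rightarrow> 1)"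

lemma Jsig_mult:
  "(Jsig :: complex^('p::finite + ('p + 'r::finite))^_) ** M = (\<chi> a k. of_real (row_sign a) * M $ a $ k)"
  by (simp add: vec_eq_iff Jsig_def row_sign_def matrix_matrix_mult_def if_distrib if_distribR
      cong: if_cong split: sum.splits)

lemma Re_qform_Jsig:
  fixes X :: "('p::finite + ('p + 'r::finite), 'n::finite) qmat"
  shows "Re (fst (qmult (qadj X) (qmult (Jsig, 0) X)) $ k $ k) =
    (\<Sum>a\<in>UNIV. row_sign a * ((cmod (fst X $ a $ k))\<^sup>2 + (cmod (snd X $ a $ k))\<^sup>2))"
proof -
  obtain A B where X: "X = (A, B)" by fastforce
  have "fst (qmult (qadj X) (qmult (Jsig, 0) X)) =
      transpose (cmat_cnj A) ** (Jsig ** A) + transpose B ** cmat_cnj (Jsig ** B)"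
    by (simp add: X qmult_def qadj_def matrix_neg_left)
  also have "\<dots> $ k $ k =
      (\<Sum>a\<in>UNIV. of_real (row_sign a) * (cnj (A $ a $ k) * A $ a $ k + B $ a $ k * cnj (B $ a $ k)))"
    unfolding Jsig_mult
    by (simp add: matrix_matrix_mult_def transpose_def cmat_cnj_def sum.distrib[symmetric] algebra_simps)
  finally show ?thesis
    by (simp add: X cmod_power2 flip: power2_eq_square)
qed

lemma Phi_denom_qmult: "Phi_denom (qmult Q g) = Phi_denom Q ** crep g"
  by (cases Q; cases g)
     (auto simp: vec_eq_iff crep_def qmult_def Phi_denom_def matrix_matrix_mult_def sum_UNIV_sum_type
        cmat_cnj_def sum_subtractf sum_negf algebra_simps split: sum.splits)

lemma Phi_num_qmult: "Phi_num (qmult Q g) = Phi_num Q ** crep g"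
  by (cases Q; cases g)
     (auto simp: vec_eq_iff crep_def qmult_def Phi_num_def matrix_matrix_mult_def sum_UNIV_sum_type
        cmat_cnj_def sum_subtractf sum_negf algebra_simps split: sum.splits)

lemma Phi_qmult:
  assumes "invertible (Phi_denom Q)" "qinvertible g"
  shows "Phi (qmult Q g) = Phi Q"
proof -
  have g: "invertible (crep g)" using assms(2) by (rule invertible_crep)
  have "Phi (qmult Q g) = Phi_num Q ** (crep g ** matrix_inv (crep g)) ** matrix_inv (Phi_denom Q)"
    unfolding Phi_def Phi_denom_qmult Phi_num_qmult matrix_inv_mult[OF assms(1) g]
    by (simp add: matrix_mul_assoc)
  then show ?thesis by (simp add: matrix_inv_right[OF g] Phi_def)
qed

(* The quaternionic column whose complex representation has first column x. *)
definition qcolumn :: "complex^('p::finite + 'p) \<Rightarrow> ('p, 1) qmat" where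
  "qcolumn x = ((\<chi> i j. x $ Inl i), (\<chi> i j. - cnj (x $ Inr i)))"

lemma qcolumn_eq_0_iff: "qcolumn x = 0 \<longleftrightarrow> x = 0"
proof
  assume "qcolumn x = 0"
  then have "x $ Inl i = 0" "x $ Inr i = 0" for i
    unfolding qcolumn_def by (auto simp: vec_eq_iff zero_prod_def dest: spec[of _ i])
  then show "x = 0" by (simp add: vec_eq_iff) (metis sum.exhaust)
qed (simp add: qcolumn_def vec_eq_iff zero_prod_def)

lemma Phi_denom_mult_vector:
  fixes Q :: "('p::finite, 'r::finite) qpoint" and x :: "complex^('p + 'p)"
  defines "y \<equiv> qmult Q (qcolumn x)"
  shows "(Phi_denom Q *v x) $ Inl i = fst y $ Inl i $ 1 - fst y $ Inr (Inl i) $ 1"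
    and "cnj ((Phi_denom Q *v x) $ Inr i) = snd y $ Inr (Inl i) $ 1 - snd y $ Inl i $ 1"
proof -
  obtain A B where Q: "Q = (A, B)" by fastforce
  show "(Phi_denom Q *v x) $ Inl i = fst y $ Inl i $ 1 - fst y $ Inr (Inl i) $ 1"
    by (simp add: y_def Q qcolumn_def qmult_def Phi_denom_def matrix_vector_mult_def
        matrix_matrix_mult_def cmat_cnj_def sum_UNIV_sum_type sum_subtractf[symmetric]
        sum.distrib[symmetric] algebra_simps)
  show "cnj ((Phi_denom Q *v x) $ Inr i) = snd y $ Inr (Inl i) $ 1 - snd y $ Inl i $ 1"
    by (simp add: y_def Q qcolumn_def qmult_def Phi_denom_def matrix_vector_mult_def
        matrix_matrix_mult_def cmat_cnj_def sum_UNIV_sum_type sum_subtractf[symmetric]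
        sum.distrib[symmetric] algebra_simps)
qed

lemma invertible_Phi_denom:
  fixes Q :: "('p::finite, 'r::finite) qpoint"
  assumes "Q \<in> Upq"
  shows "invertible (Phi_denom Q)"
proof (rule ccontr)
  assume "\<not> invertible (Phi_denom Q)"
  then obtain x where x: "Phi_denom Q *v x = 0" "x \<noteq> 0"
    using matrix_left_invertible_ker invertible_left_inverse by blast
  define y where "y = qmult Q (qcolumn x)"
  have "qneg_def (qmult (qadj Q) (qmult (Jsig, 0) Q))"
    using assms by (simp add: Upq_def)
  then have "Re (fst (qmult (qadj (qcolumn x)) (qmult (qmult (qadj Q) (qmult (Jsig, 0) Q)) (qcolumn x)))
      $ 1 $ 1) < 0"
    using x(2) qcolumn_eq_0_iff unfolding qneg_def_def by blast
  then have negative: "Re (fst (qmult (qadj y) (qmult (Jsig, 0) y)) $ 1 $ 1) < 0"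
    by (simp add: y_def qmult_assoc qadj_qmult)
  have "fst y $ Inl i $ 1 = fst y $ Inr (Inl i) $ 1" "snd y $ Inl i $ 1 = snd y $ Inr (Inl i) $ 1" for i
    using Phi_denom_mult_vector[of Q x i] x(1) by (simp_all add: y_def)
  then have "Re (fst (qmult (qadj y) (qmult (Jsig, 0) y)) $ 1 $ 1) \<ge> 0"
    by (simp add: Re_qform_Jsig sum_UNIV_sum_type row_sign_def sum_negf sum_subtractf sum.distrib sum_nonneg)
  with negative show False by simp
qed

lemma GL_invariant_on_Phi: "GL_invariant_on Upq (\<lambda>Q. Phi Q $ s $ c)"
  unfolding GL_invariant_on_def by (simp add: Phi_qmult invertible_Phi_denom)

lemma linear_Phi_denom: "linear Phi_denom"
  by (rule linearI)
     (auto simp: vec_eq_iff Phi_denom_def prod.case_eq_if scaleR_right_diff_distrib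
       split: sum.splits)

lemma linear_Phi_num: "linear Phi_num"
  by (rule linearI) (auto simp: vec_eq_iff Phi_num_def prod.case_eq_if split: sum.splits)

lemma bounded_linear_entry:
  fixes f :: "'a::euclidean_space \<Rightarrow> 'b::real_normed_vector^'n^'m"
  assumes "linear f"
  shows "bounded_linear (\<lambda>x. f x $ i $ j)"
proof -
  have "linear (\<lambda>x. f x $ i $ j)"
    using assms by (simp add: linear_iff)
  then show ?thesis by (simp add: linear_conv_bounded_linear)
qed

definition Phi_domain :: "('p::finite, 'r::finite) qpoint set" where
  "Phi_domain = {Q. det (Phi_denom Q) \<noteq> 0}"

lemma Upq_subset_Phi_domain: "Upq \<subseteq> Phi_domain"
  using invertible_Phi_denom invertible_det_nz unfolding Phi_domain_def by blast

lemma rational_on_det_Phi_denom: "rational_on S (\<lambda>Q. det (Phi_denom Q))"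
  by (intro rational_on_det rational_on_bounded_linear bounded_linear_entry linear_Phi_denom)

lemma open_Phi_domain: "open Phi_domain"
proof -
  have "continuous_on UNIV (\<lambda>Q::('p::finite, 'r::finite) qpoint. det (Phi_denom Q))"
    using rational_on_differentiable[OF rational_on_det_Phi_denom open_UNIV]
    by (intro continuous_at_imp_continuous_on ballI differentiable_imp_continuous_within)
  then show ?thesis
    unfolding Phi_domain_def by (intro open_Collect_neq continuous_on_const)
qed

lemma rational_on_Phi: "rational_on Phi_domain (\<lambda>Q. Phi Q $ s $ c)"
  unfolding Phi_def matrix_matrix_mult_def vec_lambda_beta
  by (intro rational_on_sum rational_on_mult rational_on_matrix_inv rational_on_bounded_linear
      bounded_linear_entry linear_Phi_num linear_Phi_denom) (auto simp: Phi_domain_def)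

section \<open>Derivatives along coordinate directions\<close>

lemma Phi_translate:
  assumes "Phi_denom w = 0"
  shows "Phi (Q + t *\<^sub>R w) = Phi Q + t *\<^sub>R (Phi_num w ** matrix_inv (Phi_denom Q))"
  using assms
  by (simp add: Phi_def linear_add[OF linear_Phi_denom] linear_scale[OF linear_Phi_denom]
      linear_add[OF linear_Phi_num] linear_scale[OF linear_Phi_num] matrix_add_rdistrib scalar_matrix_assoc)

definition qunit :: "bool \<Rightarrow> 'p + ('p + 'r) \<Rightarrow> 'p \<Rightarrow> complex \<Rightarrow> ('p::finite, 'r::finite) qpoint" where
  "qunit jpart a k u = (if jpart then (0, axis a (axis k u)) else (axis a (axis k u), 0))"

lemma Phi_denom_qunit_Q01: "Phi_denom (qunit c (Inl i) k u + qunit c (Inr (Inl i)) k u) = 0"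
  and Phi_num_qunit_Q01: "Phi_num (qunit c (Inl i) k u + qunit c (Inr (Inl i)) k u) = 0"
  and Phi_denom_qunit_Q2: "Phi_denom (qunit c (Inr (Inr s)) k u) = 0"
  by (cases c; auto simp: vec_eq_iff Phi_denom_def Phi_num_def qunit_def axis_def split: sum.splits)+

lemma Phi_num_qunit_Q2_mult:
  fixes M :: "complex^'n::finite^('p::finite + 'p)" and c :: bool and k :: 'p
  defines "e \<equiv> if c then Inr k else Inl k"
  shows "(Phi_num (qunit c (Inr (Inr s')) k u :: ('p, 'r::finite) qpoint) ** M) $ s $ d =
    (if s = s' then u * M $ e $ d else 0)"
proof -
  have num: "Phi_num (qunit c (Inr (Inr s')) k u :: ('p, 'r) qpoint) = (\<chi> s e'. if s = s' \<and> e' = e then u else 0)"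
    by (cases c) (auto simp: e_def vec_eq_iff Phi_num_def qunit_def axis_def split: sum.splits)
  have "(Phi_num (qunit c (Inr (Inr s')) k u :: ('p, 'r) qpoint) ** M) $ s $ d =
      (\<Sum>e'\<in>UNIV. if e' = e then (if s = s' then u * M $ e' $ d else 0) else 0)"
    unfolding num matrix_matrix_mult_def vec_lambda_beta by (rule sum.cong) auto
  then show ?thesis by simp
qed

lemma Phi_denom_translate_Q2: "Phi_denom (Q + t *\<^sub>R qunit c (Inr (Inr s)) k u) = Phi_denom Q"
  by (simp add: linear_add[OF linear_Phi_denom] linear_scale[OF linear_Phi_denom] Phi_denom_qunit_Q2)

lemma dpart_Phi_Q01:
  assumes "Q \<in> Phi_domain"
  shows "dpart (\<lambda>Q. Phi Q $ s $ d) Q (qunit c (Inl i) k u) =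
      - dpart (\<lambda>Q. Phi Q $ s $ d) Q (qunit c (Inr (Inl i)) k u)"
    and "dpart (\<lambda>Q'. dpart (\<lambda>Q. Phi Q $ s $ d) Q' (qunit c (Inl i) k u)) Q (qunit c (Inl i) k u) =
      dpart (\<lambda>Q'. dpart (\<lambda>Q. Phi Q $ s $ d) Q' (qunit c (Inr (Inl i)) k u)) Q (qunit c (Inr (Inl i)) k u)"
  using dpart_opposite_directions[OF open_Phi_domain assms
      twice_diff_on_rational_on[OF rational_on_Phi[of s d] open_Phi_domain]]
  by (simp_all add: Phi_translate Phi_denom_qunit_Q01 Phi_num_qunit_Q01)

lemma dpart_Phi_Q2:
  assumes "Q \<in> Phi_domain"
  shows "dpart (\<lambda>Q. Phi Q $ s $ d) Q (qunit c (Inr (Inr s')) k u) =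
      u * (if s = s' then matrix_inv (Phi_denom Q) $ (if c then Inr k else Inl k) $ d else 0)"
    and "dpart (\<lambda>Q'. dpart (\<lambda>Q. Phi Q $ s $ d) Q' (qunit c (Inr (Inr s')) k u)) Q
      (qunit c (Inr (Inr s')) k u) = 0"
proof -
  let ?v = "qunit c (Inr (Inr s')) k u"
  let ?slope = "\<lambda>Q. u * (if s = s' then matrix_inv (Phi_denom Q) $ (if c then Inr k else Inl k) $ d else 0)"
  have affine: "Phi (y + t *\<^sub>R ?v) $ s $ d = Phi y $ s $ d + of_real t * ?slope y" for y t
    by (simp add: Phi_translate Phi_denom_qunit_Q2 Phi_num_qunit_Q2_mult) (simp add: scaleR_conv_of_real)
  have slope: "?slope (y + t *\<^sub>R ?v) = ?slope y" for y t
    by (simp only: Phi_denom_translate_Q2)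
  have domain: "y + t *\<^sub>R ?v \<in> Phi_domain" if "y \<in> Phi_domain" for y t
    using that by (simp add: Phi_domain_def Phi_denom_translate_Q2)
  show "dpart (\<lambda>Q. Phi Q $ s $ d) Q ?v = ?slope Q" "dpart (\<lambda>Q'. dpart (\<lambda>Q. Phi Q $ s $ d) Q' ?v) Q ?v = 0"
    using dpart_affine_direction[where v = ?v and c = ?slope, OF assms
        twice_diff_on_rational_on[OF rational_on_Phi open_Phi_domain] affine slope domain] by simp_all
qed

lemma sum_Basis_prod:
  "(\<Sum>b\<in>(Basis::('a::euclidean_space \<times> 'b::euclidean_space) set). f b) =
     (\<Sum>i\<in>Basis. f (i, 0)) + (\<Sum>i\<in>Basis. f (0, i))"
proof -
  have "inj_on (\<lambda>u. (u::'a, 0::'b)) Basis" "inj_on (\<lambda>u. (0::'a, u::'b)) Basis"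
    by (auto intro!: inj_onI)
  then show ?thesis
    unfolding Basis_prod_def by (subst sum.union_disjoint) (auto simp: sum.reindex)
qed

lemma sum_Basis_vec:
  "(\<Sum>b\<in>(Basis::('a::euclidean_space^'n::finite) set). f b) = (\<Sum>i\<in>UNIV. \<Sum>u\<in>Basis. f (axis i u))"
proof -
  have Basis: "(Basis::('a^'n) set) = (\<lambda>(i, u). axis i u) ` (UNIV \<times> Basis)"
    unfolding Basis_vec_def by auto
  have inj: "inj_on (\<lambda>(i, u). axis i u :: 'a^'n) (UNIV \<times> Basis)"
    by (auto intro!: inj_onI simp: axis_eq_axis nonzero_Basis)
  show ?thesis
    unfolding Basis sum.reindex[OF inj] by (simp add: sum.cartesian_product split_def)
qed

lemma sum_Basis_qpoint:
  "(\<Sum>b\<in>(Basis::('p::finite, 'r::finite) qpoint set). f b) =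
    (\<Sum>c\<in>UNIV. \<Sum>a\<in>UNIV. \<Sum>k\<in>UNIV. f (qunit c a k 1) + f (qunit c a k \<i>))"
  unfolding sum_Basis_prod sum_Basis_vec
  by (simp add: Basis_complex_def UNIV_bool qunit_def add.commute)

lemma sE_metric_qunit:
  fixes a :: "'p::finite + ('p + 'r::finite)"
  assumes "cmod u = 1"
  shows "sE_metric (qunit c a k u :: ('p, 'r) qpoint) (qunit c a k u) = row_sign a"
proof -
  have "sE_metric X X = (\<Sum>k\<in>UNIV. \<Sum>a\<in>UNIV. row_sign a * ((cmod (fst X $ a $ k))\<^sup>2 + (cmod (snd X $ a $ k))\<^sup>2))"
    for X :: "('p, 'r) qpoint"
    by (simp add: sE_metric_def trace_def Re_qform_Jsig)
  moreover have "row_sign a' * ((cmod (fst (qunit c a k u :: ('p, 'r) qpoint) $ a' $ k'))\<^sup>2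
      + (cmod (snd (qunit c a k u :: ('p, 'r) qpoint) $ a' $ k'))\<^sup>2)
      = (if a' = a then if k' = k then row_sign a else 0 else 0)" for a' k'
    using assms by (cases c) (auto simp: qunit_def axis_def)
  ultimately show ?thesis by simp
qed

lemma tau_Phi:
  assumes "Q \<in> Phi_domain"
  shows "tau (\<lambda>Q. Phi Q $ s $ d) Q = 0"
  unfolding tau_def sum_Basis_qpoint
  by (simp add: sE_metric_qunit row_sign_def sum_UNIV_sum_type dpart_Phi_Q01[OF assms]
      dpart_Phi_Q2[OF assms] sum_negf sum.distrib)

lemma kappa_Phi:
  assumes "Q \<in> Phi_domain"
  shows "kappa (\<lambda>Q. Phi Q $ s $ d) (\<lambda>Q. Phi Q $ s' $ d') Q = 0"
  unfolding kappa_def sum_Basis_qpoint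
  by (simp add: sE_metric_qunit row_sign_def sum_UNIV_sum_type dpart_Phi_Q01[OF assms]
      dpart_Phi_Q2[OF assms] sum_negf sum.distrib algebra_simps)

theorem proposition6p2:
  shows "orthogonal_harmonic_family (Upq :: ('p::finite, 'r::finite) qpoint set)
           {(\<lambda>Q. Phi Q $ s $ c) | s c. True}
       \<and> (\<forall>s c. GL_invariant_on (Upq :: ('p, 'r) qpoint set) (\<lambda>Q. Phi Q $ s $ c))"
proof (intro conjI allI)
  have "twice_diff_on (\<lambda>Q. Phi Q $ s $ c) (Upq :: ('p, 'r) qpoint set)" for s c
    using twice_diff_on_rational_on[OF rational_on_Phi open_Phi_domain] Upq_subset_Phi_domain
    unfolding twice_diff_on_def by blast
  then show "orthogonal_harmonic_family (Upq :: ('p, 'r) qpoint set) {(\<lambda>Q. Phi Q $ s $ c) | s c. True}"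
    unfolding orthogonal_harmonic_family_def using tau_Phi kappa_Phi Upq_subset_Phi_domain by blast
qed (rule GL_invariant_on_Phi)

end
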